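(* Let $L$ be a finite-dimensional pure, nonnilpotent, solvable Lie algebra over $\mathbb{C}$ of breadth $2$ such that $\dim[L,L]=2$ and $\dim L^k=1$ for all integers $k\geq 2$. Then $\dim Z(L)=1$.
   Context: For $x\in L$, $b(x)=\mathrm{rank}(\mathrm{ad}_x)$ and the breadth of $L$ is $b(L)=\max\{b(x)\mid x\in L\}$. $L$ is pure if it has no abelian ideal as a direct summand; equivalently $Z(L)\subseteq[L,L]$, where $Z(L)$ is the center. The lower central series is indexed by $L^0=L$, $L^1=[L,L]$ and $L^k=[L,L^{k-1}]$ for $k\geq 2$. *)

theory Defs
  imports Complex_Main
begin

definition lie_algebra :: "(complex \<Rightarrow> 'v::ab_group_add \<Rightarrow> 'v) \<Rightarrow> ('v \<Rightarrow> 'v \<Rightarrow> 'v) \<Rightarrow> bool" where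
  "lie_algebra scale br \<longleftrightarrow>
     vector_space scale \<and>
     (\<forall>x y z. br (x + y) z = br x z + br y z) \<and>
     (\<forall>x y z. br x (y + z) = br x y + br x z) \<and>
     (\<forall>c x y. br (scale c x) y = scale c (br x y)) \<and>
     (\<forall>c x y. br x (scale c y) = scale c (br x y)) \<and>
     (\<forall>x. br x x = 0) \<and>
     (\<forall>x y z. br x (br y z) + br y (br z x) + br z (br x y) = 0)"

definition fin_dim :: "(complex \<Rightarrow> 'v::ab_group_add \<Rightarrow> 'v) \<Rightarrow> bool" where
  "fin_dim scale \<longleftrightarrow> (\<exists>B. finite B \<and> module.span scale B = UNIV)"

definition brk_set :: "(complex \<Rightarrow> 'v::ab_group_add \<Rightarrow> 'v) \<Rightarrow> ('v \<Rightarrow> 'v \<Rightarrow> 'v) \<Rightarrow> 'v set \<Rightarrow> 'v set \<Rightarrow> 'v set" where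
  "brk_set scale br A B = module.span scale {br a b | a b. a \<in> A \<and> b \<in> B}"

fun lcs :: "(complex \<Rightarrow> 'v::ab_group_add \<Rightarrow> 'v) \<Rightarrow> ('v \<Rightarrow> 'v \<Rightarrow> 'v) \<Rightarrow> nat \<Rightarrow> 'v set" where
  "lcs scale br 0 = UNIV"
| "lcs scale br (Suc k) = brk_set scale br UNIV (lcs scale br k)"

fun derived :: "(complex \<Rightarrow> 'v::ab_group_add \<Rightarrow> 'v) \<Rightarrow> ('v \<Rightarrow> 'v \<Rightarrow> 'v) \<Rightarrow> nat \<Rightarrow> 'v set" where
  "derived scale br 0 = UNIV"
| "derived scale br (Suc k) = brk_set scale br (derived scale br k) (derived scale br k)"

definition nilpotent_lie :: "(complex \<Rightarrow> 'v::ab_group_add \<Rightarrow> 'v) \<Rightarrow> ('v \<Rightarrow> 'v \<Rightarrow> 'v) \<Rightarrow> bool" where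
  "nilpotent_lie scale br \<longleftrightarrow> (\<exists>k. lcs scale br k = {0})"

definition solvable_lie :: "(complex \<Rightarrow> 'v::ab_group_add \<Rightarrow> 'v) \<Rightarrow> ('v \<Rightarrow> 'v \<Rightarrow> 'v) \<Rightarrow> bool" where
  "solvable_lie scale br \<longleftrightarrow> (\<exists>k. derived scale br k = {0})"

definition center :: "('v::ab_group_add \<Rightarrow> 'v \<Rightarrow> 'v) \<Rightarrow> 'v set" where
  "center br = {z. \<forall>x. br z x = 0}"

definition lie_ideal :: "(complex \<Rightarrow> 'v::ab_group_add \<Rightarrow> 'v) \<Rightarrow> ('v \<Rightarrow> 'v \<Rightarrow> 'v) \<Rightarrow> 'v set \<Rightarrow> bool" where
  "lie_ideal scale br I \<longleftrightarrow> module.subspace scale I \<and> (\<forall>x y. y \<in> I \<longrightarrow> br x y \<in> I)"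

definition pure_lie :: "(complex \<Rightarrow> 'v::ab_group_add \<Rightarrow> 'v) \<Rightarrow> ('v \<Rightarrow> 'v \<Rightarrow> 'v) \<Rightarrow> bool" where
  "pure_lie scale br \<longleftrightarrow>
     \<not> (\<exists>A B. lie_ideal scale br A \<and> lie_ideal scale br B \<and> A \<noteq> {0} \<and>
              (\<forall>a\<in>A. \<forall>a'\<in>A. br a a' = 0) \<and>
              A \<inter> B = {0} \<and> {a + b | a b. a \<in> A \<and> b \<in> B} = UNIV)"

definition breadth_elt :: "(complex \<Rightarrow> 'v::ab_group_add \<Rightarrow> 'v) \<Rightarrow> ('v \<Rightarrow> 'v \<Rightarrow> 'v) \<Rightarrow> 'v \<Rightarrow> nat" where
  "breadth_elt scale br x = vector_space.dim scale (range (br x))"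

definition breadth :: "(complex \<Rightarrow> 'v::ab_group_add \<Rightarrow> 'v) \<Rightarrow> ('v \<Rightarrow> 'v \<Rightarrow> 'v) \<Rightarrow> nat" where
  "breadth scale br = Max (range (breadth_elt scale br))"

end

theory Submission
  imports Defs
begin

(* Purity forces Z(L) \<subseteq> L^1, and Z(L) \<noteq> L^1 because [L, L^1] = L^2 \<noteq> 0; hence dim Z(L) \<le> 1.
  For the lower bound let L^2 = span {z}. Every ad x acts on the ideal L^2 by a scalar, so the
  Jacobi identity makes z commute with L^1, and the plane L^1 = span {w, z} is abelian. Since
  L^3 \<noteq> 0 there is an a with [a, z] = \<gamma> z, \<gamma> \<noteq> 0. As ad a maps the plane L^1 into the line
  L^2, it kills some c \<noteq> 0 in L^1; Jacobi for a, y, c then gives \<gamma> [y, c] = 0 for all y, so c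
  is central. *)

lemma (in vector_space) line_complement_exists:
  assumes "subspace S" and "u \<notin> S"
  obtains T where "subspace T" "S \<subseteq> T" "span {u} \<inter> T = {0}"
    "{a + b | a b. a \<in> span {u} \<and> b \<in> T} = UNIV"
proof -
  obtain B where B: "B \<subseteq> S" "independent B" "S \<subseteq> span B"
    using maximal_independent_subset[of S] by blast
  have "span B \<subseteq> S"
    using span_minimal[OF B(1) assms(1)] .
  then have u_B: "u \<notin> span B"
    using assms(2) by blast
  define E where "E = extend_basis (insert u B)"
  have indep_uB: "independent (insert u B)"
    using independent_insertI[OF u_B B(2)] .
  have E: "insert u B \<subseteq> E" "independent E" "span E = UNIV"
    unfolding E_def
    using extend_basis_superset[OF indep_uB] independent_extend_basis[OF indep_uB] indep_uB
    by simp_all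
  define T where "T = span (E - {u})"
  have u_T: "u \<notin> T"
    using E(1,2) unfolding T_def dependent_def by blast
  have "subspace T"
    unfolding T_def by simp
  moreover have "S \<subseteq> T"
    unfolding T_def using B(3) span_mono[of B "E - {u}"] E(1) u_B span_base by blast
  moreover have "span {u} \<inter> T = {0}"
  proof (intro equalityI subsetI)
    fix x assume x: "x \<in> span {u} \<inter> T"
    then obtain k where k: "x = k *s u"
      unfolding span_singleton by blast
    have "k = 0"
    proof (rule ccontr)
      assume "k \<noteq> 0"
      then have "u = inverse k *s x"
        using k by simp
      then show False
        using x u_T span_scale unfolding T_def by fastforce
    qed
    then show "x \<in> {0}"
      using k by simp
  qed (auto simp: T_def span_zero)
  moreover have "{a + b | a b. a \<in> span {u} \<and> b \<in> T} = UNIV"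
  proof (intro set_eqI iffI)
    fix v
    have "v \<in> span (insert u (E - {u}))"
      using E by (simp add: insert_absorb)
    then obtain k where "v - k *s u \<in> T"
      unfolding T_def span_breakdown_eq by blast
    moreover have "k *s u \<in> span {u}"
      by (simp add: span_base span_scale)
    moreover have "v = k *s u + (v - k *s u)"
      by simp
    ultimately show "v \<in> {a + b | a b. a \<in> span {u} \<and> b \<in> T}"
      by blast
  qed simp
  ultimately show thesis
    by (rule that)
qed

lemma fin_dim_basis_exists:
  fixes scale :: "complex \<Rightarrow> 'v::ab_group_add \<Rightarrow> 'v"
  assumes "vector_space scale" and "fin_dim scale"
  obtains Basis where "finite_dimensional_vector_space scale Basis"
proof -
  interpret vector_space scale
    using assms(1) .
  obtain S where S: "finite S" "span S = UNIV"
    using assms(2) unfolding fin_dim_def by auto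
  obtain B where B: "B \<subseteq> S" "independent B" "S \<subseteq> span B"
    using maximal_independent_subset[of S] by blast
  have "span B = UNIV"
    using B(3) S(2) span_minimal[of S "span B"] by auto
  with B S(1) have "finite_dimensional_vector_space scale B"
    by unfold_locales (auto intro: finite_subset)
  then show thesis
    by (rule that)
qed

declare lcs.simps(2) [simp del]

locale complex_lie_algebra =
  fixes scale :: "complex \<Rightarrow> 'v::ab_group_add \<Rightarrow> 'v" and br :: "'v \<Rightarrow> 'v \<Rightarrow> 'v"
  assumes lie_algebra: "lie_algebra scale br"
begin

sublocale vector_space scale
  using lie_algebra unfolding lie_algebra_def by auto

lemma bracket_add_left: "br (x + y) z = br x z + br y z"
  and bracket_add_right: "br x (y + z) = br x y + br x z"
  and bracket_scale_left: "br (scale c x) y = scale c (br x y)"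
  and bracket_scale_right: "br x (scale c y) = scale c (br x y)"
  and bracket_self [simp]: "br x x = 0"
  and jacobi: "br x (br y z) + br y (br z x) + br z (br x y) = 0"
  using lie_algebra unfolding lie_algebra_def by auto

lemma bracket_zero_right [simp]: "br x 0 = 0"
  using bracket_add_right[of x 0 0] by simp

lemma bracket_zero_left [simp]: "br 0 x = 0"
  using bracket_add_left[of 0 0 x] by simp

lemma bracket_minus_right [simp]: "br x (- y) = - br x y"
  using bracket_add_right[of x y "- y"] by (simp add: eq_neg_iff_add_eq_0 add.commute)

lemma bracket_diff_right: "br x (y - z) = br x y - br x z"
  using bracket_add_right[of x y "- z"] by simp

lemma bracket_antisym: "br x y = - br y x"
proof -
  have "br (x + y) (x + y) = br x x + br y x + (br x y + br y y)"
    by (simp only: bracket_add_left bracket_add_right)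
  then have "br x y + br y x = 0"
    by (simp add: add.commute)
  then show ?thesis
    by (simp add: eq_neg_iff_add_eq_0)
qed

lemma bracket_span_right_eq_0:
  assumes "\<forall>t\<in>T. br u t = 0" and "v \<in> span T"
  shows "br u v = 0"
  using assms(2)
proof (induction rule: span_induct_alt)
  case (step c x y)
  then show ?case
    using assms(1) by (simp add: bracket_add_right bracket_scale_right)
qed simp

lemma bracket_span_eq_0:
  assumes "\<forall>s\<in>S. \<forall>t\<in>T. br s t = 0" and "u \<in> span S" and "v \<in> span T"
  shows "br u v = 0"
proof -
  have "\<forall>s\<in>S. br v s = 0"
    using assms(1,3) bracket_span_right_eq_0[of T] bracket_antisym by (metis neg_equal_0_iff_equal)
  then show ?thesis
    using bracket_span_right_eq_0[OF _ assms(2)] bracket_antisym by (metis neg_equal_0_iff_equal)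
qed

lemma subspace_center: "subspace (center br)"
  unfolding subspace_def center_def by (auto simp: bracket_add_left bracket_scale_left)

lemma lcs_Suc_eq_span: "lcs scale br (Suc k) = span {br x v | x v. v \<in> lcs scale br k}"
  by (simp add: lcs.simps(2) brk_set_def)

lemma subspace_lcs: "subspace (lcs scale br k)"
  by (cases k) (simp_all add: lcs_Suc_eq_span)

lemma bracket_in_lcs_Suc: "v \<in> lcs scale br k \<Longrightarrow> br x v \<in> lcs scale br (Suc k)"
  unfolding lcs_Suc_eq_span by (rule span_base) blast

lemma bracket_in_derived: "br x y \<in> lcs scale br 1"
  using bracket_in_lcs_Suc[of y 0] by simp

lemma lcs_Suc_subset: "lcs scale br (Suc k) \<subseteq> lcs scale br k"
proof (induction k)
  case (Suc k)
  have "{br x v | x v. v \<in> lcs scale br (Suc k)} \<subseteq> lcs scale br (Suc k)"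
    using Suc.IH bracket_in_lcs_Suc by blast
  then show ?case
    unfolding lcs_Suc_eq_span[of "Suc k"] by (rule span_minimal[OF _ subspace_lcs])
qed simp

lemma lie_ideal_lcs: "lie_ideal scale br (lcs scale br k)"
  unfolding lie_ideal_def using subspace_lcs bracket_in_lcs_Suc lcs_Suc_subset by blast

lemma lcs_Suc_eq_0_iff:
  "lcs scale br (Suc k) = {0} \<longleftrightarrow> (\<forall>x. \<forall>v\<in>lcs scale br k. br x v = 0)"
proof
  assume "lcs scale br (Suc k) = {0}"
  then show "\<forall>x. \<forall>v\<in>lcs scale br k. br x v = 0"
    using bracket_in_lcs_Suc by blast
next
  assume "\<forall>x. \<forall>v\<in>lcs scale br k. br x v = 0"
  then have "{br x v | x v. v \<in> lcs scale br k} \<subseteq> {0}"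
    by blast
  then have "lcs scale br (Suc k) \<subseteq> span {0}"
    unfolding lcs_Suc_eq_span by (rule span_mono)
  then show "lcs scale br (Suc k) = {0}"
    using subspace_0[OF subspace_lcs] by auto
qed

lemma lie_ideal_if_derived_subset:
  assumes "subspace T" and "lcs scale br 1 \<subseteq> T"
  shows "lie_ideal scale br T"
  using assms bracket_in_derived unfolding lie_ideal_def by blast

lemma center_subset_derived_if_pure:
  assumes "pure_lie scale br"
  shows "center br \<subseteq> lcs scale br 1"
proof
  fix u assume u: "u \<in> center br"
  show "u \<in> lcs scale br 1"
  proof (rule ccontr)
    assume "u \<notin> lcs scale br 1"
    obtain T where T: "subspace T" "lcs scale br 1 \<subseteq> T" "span {u} \<inter> T = {0}"
      "{a + b | a b. a \<in> span {u} \<and> b \<in> T} = UNIV"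
      by (rule line_complement_exists[OF subspace_lcs \<open>u \<notin> lcs scale br 1\<close>])
    have u_nonzero: "u \<noteq> 0"
      using \<open>u \<notin> lcs scale br 1\<close> subspace_0[OF subspace_lcs] by blast
    have bracket_line: "br x y = 0" if "y \<in> span {u}" for x y
      using that u bracket_antisym[of x u]
      by (auto simp: span_singleton center_def bracket_scale_right)
    then have "lie_ideal scale br (span {u})"
      unfolding lie_ideal_def by (simp add: span_zero)
    moreover have "span {u} \<noteq> {0}"
      using u_nonzero span_base[of u "{u}"] by blast
    ultimately show False
      using assms bracket_line T lie_ideal_if_derived_subset[OF T(1,2)]
      unfolding pure_lie_def by blast
  qed
qed

lemma bracket_derived_eq_0_if_line_ideal:
  assumes "lie_ideal scale br (span {z})" and "v \<in> lcs scale br 1"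
  shows "br z v = 0"
proof -
  have eigen: "\<exists>k. br x z = scale k z" for x
    using assms(1) span_base[of z "{z}"] unfolding lie_ideal_def span_singleton by blast
  have "br z (br x y) = 0" for x y
  proof -
    obtain p q where p: "br y z = scale p z" and q: "br x z = scale q z"
      using eigen by metis
    have "br x (br y z) = scale (q * p) z"
      using p q by (simp add: bracket_scale_right)
    moreover have "br y (br z x) = - scale (q * p) z"
      using p q bracket_antisym[of z x] by (simp add: bracket_scale_right mult.commute)
    ultimately show ?thesis
      using jacobi[of x y z] by simp
  qed
  then have "\<forall>t\<in>{br x y | x y. y \<in> lcs scale br 0}. br z t = 0"
    by blast
  then show ?thesis
    using assms(2) bracket_span_right_eq_0 unfolding lcs_Suc_eq_span[of 0] One_nat_def by blast
qed

lemma bracket_derived_in_line: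
  assumes "lcs scale br 2 \<subseteq> span {z}" and "v \<in> lcs scale br 1"
  obtains k where "br x v = scale k z"
  using assms bracket_in_lcs_Suc[OF assms(2), of x] by (auto simp: span_singleton numeral_2_eq_2)

lemma central_if_commutes_with_eigenvector:
  assumes abelian: "\<forall>u\<in>lcs scale br 1. \<forall>v\<in>lcs scale br 1. br u v = 0"
    and L2: "lcs scale br 2 \<subseteq> span {z}" and "z \<noteq> 0"
    and eigen: "br a z = scale \<gamma> z" and "\<gamma> \<noteq> 0"
    and c: "c \<in> lcs scale br 1" "br a c = 0"
  shows "c \<in> center br"
proof -
  have c_y: "br y c = 0" for y
  proof -
    obtain s where s: "br y c = scale s z"
      using bracket_derived_in_line[OF L2 c(1)] .
    have "br c a = 0"
      using c(2) bracket_antisym[of c a] by simp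
    moreover have "br c (br a y) = 0"
      using abelian c(1) bracket_in_derived by blast
    ultimately have "br a (br y c) = 0"
      using jacobi[of a y c] by simp
    then have "scale (s * \<gamma>) z = 0"
      using s eigen by (simp add: bracket_scale_right)
    then show ?thesis
      using s \<open>z \<noteq> 0\<close> \<open>\<gamma> \<noteq> 0\<close> by simp
  qed
  have "br c y = 0" for y
    using c_y[of y] bracket_antisym[of c y] by simp
  then show ?thesis
    unfolding center_def by blast
qed

end

locale finite_dimensional_complex_lie_algebra =
  complex_lie_algebra scale br + finite_dimensional_vector_space scale Basis
  for scale :: "complex \<Rightarrow> 'v::ab_group_add \<Rightarrow> 'v" and br and Basis
begin

lemma dim_eq_1_span_singleton:
  assumes "subspace S" and "dim S = 1"
  obtains z where "z \<noteq> 0" "S = span {z}"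
proof -
  obtain B where B: "independent B" "span B = S" "card B = 1"
    using basis_subspace_exists[OF assms(1)] assms(2) by metis
  then obtain z where "B = {z}"
    using card_1_singletonE by metis
  then show thesis
    using that B by simp
qed

lemma dim_eq_2_span_pair:
  assumes "subspace S" and "dim S = 2" and "z \<in> S" and "z \<noteq> 0"
  obtains w where "w \<in> S" "w \<notin> span {z}" "S = span {w, z}"
proof -
  have "span {z} \<noteq> S"
    using assms(2,4) dim_span[of "{z}"] by force
  moreover have "span {z} \<subseteq> S"
    using span_minimal assms(1,3) by blast
  ultimately obtain w where w: "w \<in> S" "w \<notin> span {z}"
    by blast
  have "independent {w, z}"
    using independent_insertI[OF w(2)] assms(4) by simp
  moreover have "card {w, z} = 2"
    using w(2) span_base[of z "{z}"] by (cases "w = z") auto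
  ultimately have "S \<subseteq> span {w, z}"
    using card_ge_dim_independent[of "{w, z}" S] assms(2,3) w(1) by simp
  moreover have "span {w, z} \<subseteq> S"
    using assms(1,3) w(1) by (intro span_minimal) auto
  ultimately show thesis
    using that w by blast
qed

lemma lcs_2_span_singleton:
  assumes "dim (lcs scale br 2) = 1"
  obtains z where "z \<noteq> 0" "z \<in> lcs scale br 1" "lcs scale br 2 = span {z}"
proof -
  obtain z where z: "z \<noteq> 0" "lcs scale br 2 = span {z}"
    by (rule dim_eq_1_span_singleton[OF subspace_lcs assms])
  moreover have "z \<in> lcs scale br 1"
    using z(2) lcs_Suc_subset[of 1] span_base[of z "{z}"] by (auto simp: numeral_2_eq_2)
  ultimately show thesis
    using that by blast
qed

lemma derived_abelian_if_dim:
  assumes "dim (lcs scale br 1) = 2" and "dim (lcs scale br 2) = 1"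
    and "u \<in> lcs scale br 1" and "v \<in> lcs scale br 1"
  shows "br u v = 0"
proof -
  obtain z where z: "z \<noteq> 0" "z \<in> lcs scale br 1" "lcs scale br 2 = span {z}"
    by (rule lcs_2_span_singleton[OF assms(2)])
  have "lie_ideal scale br (span {z})"
    using lie_ideal_lcs[of 2] z(3) by simp
  then have z_commutes: "\<forall>v\<in>lcs scale br 1. br z v = 0"
    using bracket_derived_eq_0_if_line_ideal by blast
  obtain w where w: "w \<in> lcs scale br 1" "w \<notin> span {z}" "lcs scale br 1 = span {w, z}"
    by (rule dim_eq_2_span_pair[OF subspace_lcs assms(1) z(2,1)])
  have "\<forall>s\<in>{w, z}. \<forall>t\<in>{w, z}. br s t = 0"
    using z_commutes w(1) bracket_antisym[of w z] by auto
  then show ?thesis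
    using assms(3,4) unfolding w(3) by (rule bracket_span_eq_0)
qed

lemma commuting_element_in_derived_exists:
  assumes "dim (lcs scale br 1) = 2" and "dim (lcs scale br 2) = 1"
  obtains c where "c \<noteq> 0" "c \<in> lcs scale br 1" "br a c = 0"
proof -
  obtain z where z: "z \<noteq> 0" "z \<in> lcs scale br 1" "lcs scale br 2 = span {z}"
    by (rule lcs_2_span_singleton[OF assms(2)])
  obtain w where w: "w \<in> lcs scale br 1" "w \<notin> span {z}" "lcs scale br 1 = span {w, z}"
    by (rule dim_eq_2_span_pair[OF subspace_lcs assms(1) z(2,1)])
  obtain \<gamma> where \<gamma>: "br a z = scale \<gamma> z"
    using bracket_derived_in_line[OF equalityD1[OF z(3)] z(2)] .
  obtain \<beta> where \<beta>: "br a w = scale \<beta> z"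
    using bracket_derived_in_line[OF equalityD1[OF z(3)] w(1)] .
  show thesis
  proof (cases "\<gamma> = 0")
    case True
    then show thesis
      using that z(1,2) \<gamma> by simp
  next
    case False
    define c where "c = scale \<gamma> w - scale \<beta> z"
    have "c \<noteq> 0"
    proof
      assume "c = 0"
      then have "w = scale (inverse \<gamma> * \<beta>) z"
        using False unfolding c_def by (simp add: scale_left_imp_eq)
      then show False
        using w(2) by (simp add: span_base span_scale)
    qed
    moreover have "c \<in> lcs scale br 1"
      unfolding c_def using w(3) by (simp add: span_base span_diff span_scale)
    moreover have "br a c = 0"
      unfolding c_def by (simp add: bracket_diff_right bracket_scale_right \<gamma> \<beta> mult.commute)
    ultimately show thesis
      by (rule that)
  qed
qed

lemma nonzero_central_element_exists:
  assumes "dim (lcs scale br 1) = 2" and "dim (lcs scale br 2) = 1"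
    and "lcs scale br 3 \<noteq> {0}"
  obtains c where "c \<noteq> 0" "c \<in> center br"
proof -
  obtain z where z: "z \<noteq> 0" "z \<in> lcs scale br 1" "lcs scale br 2 = span {z}"
    by (rule lcs_2_span_singleton[OF assms(2)])
  obtain a where "br a z \<noteq> 0"
    using assms(3) lcs_Suc_eq_0_iff[of 2] z(3) bracket_scale_right
    by (auto simp: span_singleton numeral_3_eq_3)
  moreover obtain \<gamma> where \<gamma>: "br a z = scale \<gamma> z"
    using bracket_derived_in_line[OF equalityD1[OF z(3)] z(2)] .
  ultimately have "\<gamma> \<noteq> 0"
    by auto
  obtain c where c: "c \<noteq> 0" "c \<in> lcs scale br 1" "br a c = 0"
    by (rule commuting_element_in_derived_exists[OF assms(1,2)])
  have "c \<in> center br"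
    using central_if_commutes_with_eigenvector[OF _ equalityD1[OF z(3)] z(1) \<gamma> \<open>\<gamma> \<noteq> 0\<close> c(2,3)]
      derived_abelian_if_dim[OF assms(1,2)] by blast
  then show thesis
    using that c(1) by blast
qed

lemma dim_center_less_dim_derived:
  assumes "center br \<subseteq> lcs scale br 1" and "lcs scale br 2 \<noteq> {0}"
  shows "dim (center br) < dim (lcs scale br 1)"
proof -
  have "center br \<noteq> lcs scale br 1"
  proof
    assume "center br = lcs scale br 1"
    then have "br v x = 0" if "v \<in> lcs scale br 1" for x v
      using that unfolding center_def by blast
    then have "\<forall>x. \<forall>v\<in>lcs scale br 1. br x v = 0"
      using bracket_antisym by (metis neg_equal_0_iff_equal)
    then show False
      using assms(2) lcs_Suc_eq_0_iff[of 1] by (simp add: numeral_2_eq_2)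
  qed
  then have "center br \<subset> lcs scale br 1"
    using assms(1) by blast
  moreover have "span (center br) = center br" and "span (lcs scale br 1) = lcs scale br 1"
    by (simp_all add: subspace_center subspace_lcs)
  ultimately have "span (center br) \<subset> span (lcs scale br 1)"
    by (simp only:)
  then show ?thesis
    by (rule dim_psubset)
qed

end

theorem lemma3p3:
  fixes scale :: "complex \<Rightarrow> 'v::ab_group_add \<Rightarrow> 'v"
    and br :: "'v \<Rightarrow> 'v \<Rightarrow> 'v"
  assumes "lie_algebra scale br"
    and "fin_dim scale"
    and "pure_lie scale br"
    and "\<not> nilpotent_lie scale br"
    and "solvable_lie scale br"
    and "breadth scale br = 2"
    and "vector_space.dim scale (lcs scale br 1) = 2"
    and "\<forall>k\<ge>2. vector_space.dim scale (lcs scale br k) = 1"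
  shows "vector_space.dim scale (center br) = 1"
proof -
  interpret complex_lie_algebra scale br
    using assms(1) by (rule complex_lie_algebra.intro)
  obtain Basis where "finite_dimensional_vector_space scale Basis"
    using fin_dim_basis_exists[OF vector_space_axioms assms(2)] .
  then interpret finite_dimensional_complex_lie_algebra scale br Basis
    by (intro_locales; simp add: finite_dimensional_vector_space_def)
  have dim_L2: "dim (lcs scale br 2) = 1" and dim_L3: "dim (lcs scale br 3) = 1"
    using assms(8) by simp_all
  then have L2: "lcs scale br 2 \<noteq> {0}" and L3: "lcs scale br 3 \<noteq> {0}"
    by auto
  obtain c where "c \<noteq> 0" "c \<in> center br"
    by (rule nonzero_central_element_exists[OF assms(7) dim_L2 L3])
  then have "dim (center br) \<noteq> 0"
    by auto
  moreover have "dim (center br) < 2"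
    using dim_center_less_dim_derived[OF center_subset_derived_if_pure[OF assms(3)] L2] assms(7)
    by simp
  ultimately show ?thesis
    by linarith
qed

end
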